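(* Let $\nu,m_1,m_2,t$ be positive integers with $\nu>m_i\ge t+1$ for $i\in\{1,2\}$. Then $$c_1(\nu,m_1,m_2,t)>s_0(\nu,m_1,m_2+1,t)\,N'(t;m_2;2\nu).$$ Moreover, if additionally $2\nu\ge m_1+2m_2-t+4$, then $$c_1(\nu,m_1,m_2,t)>\left({m_2-t+1\brack 1}-q^{-2}\right)N'(t+1;m_1;2\nu)\,N'(t;m_2;2\nu).$$
   Context: Let $q$ be a prime power, $\nu\ge 1$ an integer, and $f$ a non-degenerate alternating bilinear form on $V=\mathbb F_q^{2\nu}$. A subspace $W\le V$ is totally isotropic if $f(x,y)=0$ for all $x,y\in W$. For $0\le m\le \nu$, $\mathcal P_m$ denotes the set of all $m$-dimensional totally isotropic subspaces of $V$; ${A\brack k}$ is the set of $k$-dimensional subspaces of a subspace $A$. Gaussian binomial coefficient: ${n\brack k}=\prod_{i=0}^{k-1}\frac{q^{n-i}-1}{q^{k-i}-1}$, ${n\brack 0}=1$, ${n\brack k}=0$ for $k<0$. For integers $0\le a\le m\le\nu$, $N'(a;m;2\nu)=\prod_{i=1}^{m-a}\frac{q^{2(\nu-m+i)}-1}{q^{i}-1}$ (the number of members of $\mathcal P_m$ containing a fixed member of $\mathcal P_a$). For $M\in\mathcal P_{m_2+1}$ and a $t$-dimensional subspace $T\subseteq M$ let $\mathcal C_1(M,T;m_1,t)=\{F\in\mathcal P_{m_1}: T\subseteq F,\ \dim(F\cap M)\ge t+1\}$ and $\mathcal C_2(M,T;m_2)=\{F\in\mathcal P_{m_2}: T\subseteq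 F\}\cup{M\brack m_2}$. The product $|\mathcal C_1(M,T;m_1,t)|\cdot|\mathcal C_2(M,T;m_2)|$ does not depend on the choice of $M,T$; it is denoted $c_1(\nu,m_1,m_2,t)$. Also $s_0(\nu,m,s,t)={s-t\brack 1}N'(t+1;m;2\nu)-q{s-t\brack 2}N'(t+2;m;2\nu)$. *)

theory Defs
  imports "HOL-Analysis.Analysis"
begin

text \<open>Vectors of V = F_q^(2 nu) are modelled as 'a^'n with 'a a finite field
  (so q = CARD('a) is a prime power) and CARD('n) = 2 nu.\<close>

definition alt_bilinear :: "('a::field^'n \<Rightarrow> 'a^'n \<Rightarrow> 'a) \<Rightarrow> bool" where
  "alt_bilinear f \<longleftrightarrow>
     (\<forall>x y z. f (x + y) z = f x z + f y z) \<and>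
     (\<forall>x y z. f x (y + z) = f x y + f x z) \<and>
     (\<forall>c x y. f (c *s x) y = c * f x y) \<and>
     (\<forall>c x y. f x (c *s y) = c * f x y) \<and>
     (\<forall>x. f x x = 0)"

definition nondegenerate :: "('a::field^'n \<Rightarrow> 'a^'n \<Rightarrow> 'a) \<Rightarrow> bool" where
  "nondegenerate f \<longleftrightarrow> (\<forall>x. (\<forall>y. f x y = 0) \<longrightarrow> x = 0)"

definition totally_isotropic :: "('a::field^'n \<Rightarrow> 'a^'n \<Rightarrow> 'a) \<Rightarrow> ('a^'n) set \<Rightarrow> bool" where
  "totally_isotropic f W \<longleftrightarrow> vec.subspace W \<and> (\<forall>x\<in>W. \<forall>y\<in>W. f x y = 0)"

definition Pm :: "('a::field^'n \<Rightarrow> 'a^'n \<Rightarrow> 'a) \<Rightarrow> nat \<Rightarrow> ('a^'n) set set" where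
  "Pm f m = {W. totally_isotropic f W \<and> vec.dim W = m}"

definition subspaces_of :: "('a::field^'n) set \<Rightarrow> nat \<Rightarrow> ('a^'n) set set" where
  "subspaces_of A k = {B. vec.subspace B \<and> B \<subseteq> A \<and> vec.dim B = k}"

definition C1 :: "('a::field^'n \<Rightarrow> 'a^'n \<Rightarrow> 'a) \<Rightarrow> ('a^'n) set \<Rightarrow> ('a^'n) set \<Rightarrow> nat \<Rightarrow> nat
                    \<Rightarrow> ('a^'n) set set" where
  "C1 f M T m1 t = {F \<in> Pm f m1. T \<subseteq> F \<and> vec.dim (F \<inter> M) \<ge> t + 1}"

definition C2 :: "('a::field^'n \<Rightarrow> 'a^'n \<Rightarrow> 'a) \<Rightarrow> ('a^'n) set \<Rightarrow> ('a^'n) set \<Rightarrow> nat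
                    \<Rightarrow> ('a^'n) set set" where
  "C2 f M T m2 = {F \<in> Pm f m2. T \<subseteq> F} \<union> subspaces_of M m2"

definition gbinom :: "real \<Rightarrow> nat \<Rightarrow> nat \<Rightarrow> real" where
  "gbinom q n k = (\<Prod>i<k. (q ^ (n - i) - 1) / (q ^ (k - i) - 1))"

text \<open>N'(a;m;2nu); taken to be 0 when a > m (no member of P_m contains a member of P_a).\<close>
definition Nprime :: "real \<Rightarrow> nat \<Rightarrow> nat \<Rightarrow> nat \<Rightarrow> real" where
  "Nprime q a m \<nu> = (if a \<le> m then (\<Prod>i=1..m-a. (q ^ (2 * (\<nu> - m + i)) - 1) / (q ^ i - 1)) else 0)"

definition s0 :: "real \<Rightarrow> nat \<Rightarrow> nat \<Rightarrow> nat \<Rightarrow> nat \<Rightarrow> real" where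
  "s0 q \<nu> m s t = gbinom q (s - t) 1 * Nprime q (t + 1) m \<nu>
                   - q * gbinom q (s - t) 2 * Nprime q (t + 2) m \<nu>"

end

theory Submission
  imports Defs
begin

text \<open>
  Let S be the set of members of P_m1 containing T. For F in S put k = dim (M \<inter> F) - t: the
  subspaces between T and M \<inter> F of dimension t + 1 and t + 2 number [k,1] and [k,2], and
  [k,1] - q [k,2] is at most 1, and at most 0 if k = 0. Summing over S and exchanging the order of
  summation bounds |C1| below by s0, because a subspace U between T and M is totally isotropic and
  lies in N'(dim U; m1) members of S. These counts rest on two facts: a subspace A of X has
  [dim X - dim A, 1] extensions by one dimension inside X, and the totally isotropic such extensions
  of a totally isotropic A are those inside its orthogonal complement, of dimension 2\<nu> - dim A.
  Besides its members containing T, C2 contains a hyperplane of M missing T, so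
  |C2| \<ge> N'(t;m2) + 1, which gives the first inequality. The second one follows from
  q [m2-t+1, 2] N'(t+2;m1) \<le> q^-2 N'(t+1;m1).
\<close>

section \<open>Gaussian binomial coefficients\<close>

lemma gbinom_1: "gbinom q n 1 = (q ^ n - 1) / (q - 1)"
  by (simp add: gbinom_def)

lemma gbinom_1_pos: "(q::real) > 1 \<Longrightarrow> n > 0 \<Longrightarrow> gbinom q n 1 > 0"
  unfolding gbinom_1 by (intro divide_pos_pos) simp_all

lemma gbinom_Suc_1: "(q::real) \<noteq> 1 \<Longrightarrow> gbinom q (Suc j) 1 = 1 + q * gbinom q j 1"
  unfolding gbinom_1 by (simp add: field_simps)

lemma one_le_gbinom_1: "(q::real) > 1 \<Longrightarrow> 0 < j \<Longrightarrow> 1 \<le> gbinom q j 1"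
  using power_increasing[of 1 j q] unfolding gbinom_1 by (simp add: field_simps)

lemma gbinom_2_mult_gbinom_2_1:
  fixes q :: real
  assumes "q > 1"
  shows "gbinom q n 2 * gbinom q 2 1 = gbinom q n 1 * gbinom q (n - 1) 1"
proof -
  have "q ^ 2 > 1" using assms by (intro one_less_power) auto
  then show ?thesis using assms by (simp add: gbinom_def numeral_2_eq_2)
qed

text \<open>The case k > 0 amounts to [k-1, 1] \<le> [k, 2], i.e. [2, 1] \<le> [k, 1].\<close>
lemma gbinom_1_minus_gbinom_2_le:
  fixes q :: real
  assumes q: "q > 1"
  shows "gbinom q k 1 - q * gbinom q k 2 \<le> (if k = 0 then 0 else 1)"
proof (cases k)
  case 0
  then show ?thesis by (simp add: gbinom_def)
next
  case (Suc j)
  have "gbinom q 2 1 = q + 1" using q unfolding gbinom_1 by (simp add: power2_eq_square field_simps)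
  then have k2: "gbinom q k 2 * (q + 1) = gbinom q k 1 * gbinom q j 1"
    using gbinom_2_mult_gbinom_2_1[OF q, of k] Suc by simp
  have "gbinom q j 1 \<le> gbinom q k 2"
  proof (cases "j = 0")
    case True
    then show ?thesis using Suc by (simp add: gbinom_def numeral_2_eq_2)
  next
    case False
    have "q + 1 \<le> gbinom q k 1"
      using gbinom_Suc_1[of q j] one_le_gbinom_1[OF q, of j] False Suc q by simp
    moreover have "0 \<le> gbinom q j 1" using one_le_gbinom_1[OF q, of j] False by simp
    ultimately have "gbinom q j 1 * (q + 1) \<le> gbinom q j 1 * gbinom q k 1"
      by (rule mult_left_mono)
    then have "gbinom q j 1 * (q + 1) \<le> gbinom q k 2 * (q + 1)"
      unfolding k2 by (simp only: mult.commute)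
    then show ?thesis using q by simp
  qed
  then have "q * gbinom q j 1 \<le> q * gbinom q k 2" using q by simp
  then show ?thesis using gbinom_Suc_1[of q j] q Suc by simp
qed

lemma gbinom_2_mult_gbinom_1_le:
  fixes q :: real
  assumes q: "q \<ge> 2" and a: "1 \<le> a" and n: "1 \<le> n" and E: "2 * n + a + 1 \<le> E"
  shows "q ^ 3 * gbinom q n 2 * gbinom q a 1 \<le> gbinom q E 1"
proof -
  have pos: "0 \<le> q ^ k - 1" for k using q by (simp add: one_le_power)
  have "q ^ 3 * ((q ^ n - 1) * (q ^ (n - 1) - 1)) * (q ^ a - 1) \<le> q ^ 3 * (q ^ n * q ^ (n - 1)) * q ^ a"
    using q pos by (intro mult_mono) auto
  also have "\<dots> = q ^ (2 * n + a + 2)" using n by (simp flip: power_add)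
  also have "\<dots> \<le> q ^ (E + 1)" using q E by (intro power_increasing) auto
  also have "\<dots> \<le> (q ^ E - 1) * (q + 1)"
  proof -
    have "q ^ 2 \<le> q ^ E" using q E n by (intro power_increasing) auto
    moreover have "2 * q \<le> q * q" using q by (intro mult_right_mono) auto
    then have "q + 1 \<le> q ^ 2" using q unfolding power2_eq_square by linarith
    ultimately show ?thesis by (simp add: algebra_simps)
  qed
  also have "\<dots> \<le> (q ^ E - 1) * ((q + 1) * (q - 1) * (q - 1))"
  proof -
    have "1 \<le> (q - 1) * (q - 1)" using mult_mono[of 1 "q - 1" 1 "q - 1"] q by simp
    then have "(q + 1) * 1 \<le> (q + 1) * ((q - 1) * (q - 1))" using q by (intro mult_left_mono) auto
    then show ?thesis using pos[of E] by (intro mult_left_mono) (simp_all add: mult.assoc)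
  qed
  finally have core: "q ^ 3 * ((q ^ n - 1) * (q ^ (n - 1) - 1)) * (q ^ a - 1)
                      \<le> (q ^ E - 1) * ((q + 1) * (q - 1) * (q - 1))" .
  define X where "X = (q ^ n - 1) * (q ^ (n - 1) - 1)"
  define D where "D = (q + 1) * (q - 1) * (q - 1)"
  have D: "D > 0" using q by (simp add: D_def)
  have "q ^ 2 - 1 = (q + 1) * (q - 1)" by (simp add: power2_eq_square algebra_simps)
  then have "gbinom q n 2 = X / D"
    by (simp add: gbinom_def numeral_2_eq_2 X_def D_def)
  then have "q ^ 3 * gbinom q n 2 * gbinom q a 1 = q ^ 3 * X * (q ^ a - 1) / (D * (q - 1))"
    unfolding gbinom_1 by simp
  also have "\<dots> \<le> (q ^ E - 1) * D / (D * (q - 1))"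
    using core D q by (intro divide_right_mono) (simp_all add: X_def D_def)
  also have "\<dots> = gbinom q E 1" using D unfolding gbinom_1 by simp
  finally show ?thesis .
qed

lemma Nprime_mult_gbinom:
  fixes q :: real
  assumes q: "q > 1" and am: "a < m" and m\<nu>: "m \<le> \<nu>"
  shows "Nprime q a m \<nu> * gbinom q (m - a) 1 = gbinom q (2 * (\<nu> - a)) 1 * Nprime q (Suc a) m \<nu>"
proof -
  obtain k where k: "m - a = Suc k" using am by (metis Suc_diff_Suc)
  define g where "g i = (q ^ (2 * (\<nu> - m + i)) - 1) / (q ^ i - 1)" for i
  have "m - Suc a = k" using k by simp
  then have "Nprime q a m \<nu> = prod g {1..Suc k}" "Nprime q (Suc a) m \<nu> = prod g {1..k}"
    using am k by (simp_all add: Nprime_def g_def)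
  moreover have "g (Suc k) * gbinom q (Suc k) 1 = gbinom q (2 * (\<nu> - a)) 1"
  proof -
    have "q ^ Suc k > 1" using q by (intro one_less_power) auto
    then have "q ^ Suc k \<noteq> 1" by simp
    moreover have "\<nu> - m + Suc k = \<nu> - a" using k m\<nu> by simp
    ultimately show ?thesis using q unfolding g_def gbinom_1 by (simp del: power_Suc)
  qed
  ultimately show ?thesis by (simp add: prod.cl_ivl_Suc k mult_ac)
qed

lemma Nprime_pos:
  fixes q :: real
  assumes "q > 1" "a \<le> m" "m \<le> \<nu>"
  shows "Nprime q a m \<nu> > 0"
  using assms by (auto simp: Nprime_def one_less_power intro!: prod_pos divide_pos_pos)

lemma Nprime_nonneg: "(q::real) > 1 \<Longrightarrow> m \<le> \<nu> \<Longrightarrow> Nprime q a m \<nu> \<ge> 0"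
  using Nprime_pos[of q a m \<nu>] by (cases "a \<le> m") (auto simp: Nprime_def)

lemma s0_lower_bound:
  fixes q :: real
  assumes q: "q \<ge> 2" and m1: "t + 1 \<le> m1" "m1 \<le> \<nu>" and m2: "t + 1 \<le> m2"
    and dim: "m1 + 2 * m2 - t + 4 \<le> 2 * \<nu>"
  shows "(gbinom q (m2 - t + 1) 1 - q powi (-2)) * Nprime q (t + 1) m1 \<nu> \<le> s0 q \<nu> m1 (m2 + 1) t"
proof -
  define n where "n = m2 - t + 1"
  have q1: "q > 1" using q by simp
  have "q * gbinom q n 2 * Nprime q (t + 2) m1 \<nu> \<le> Nprime q (t + 1) m1 \<nu> / q ^ 2"
  proof (cases "m1 = t + 1")
    case True
    then show ?thesis using Nprime_nonneg[OF q1 m1(2), of "t + 1"] by (simp add: Nprime_def)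
  next
    case False
    define a where "a = m1 - (t + 1)"
    define E where "E = 2 * (\<nu> - (t + 1))"
    have a: "1 \<le> a" and "a > 0" using False m1 by (simp_all add: a_def)
    have "q ^ 3 * gbinom q n 2 * gbinom q a 1 \<le> gbinom q E 1"
      using dim m1 m2 False
      by (intro gbinom_2_mult_gbinom_1_le[OF q a]) (auto simp: n_def a_def E_def)
    then have "q ^ 3 * gbinom q n 2 * gbinom q a 1 * Nprime q (t + 2) m1 \<nu>
               \<le> gbinom q E 1 * Nprime q (t + 2) m1 \<nu>"
      using Nprime_nonneg[OF q1 m1(2)] by (intro mult_right_mono) auto
    also have "\<dots> = Nprime q (t + 1) m1 \<nu> * gbinom q a 1"
      using Nprime_mult_gbinom[OF q1 _ m1(2), of "t + 1"] False m1 by (simp add: a_def E_def)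
    finally have "(q * gbinom q n 2 * Nprime q (t + 2) m1 \<nu>) * (q ^ 2 * gbinom q a 1)
                  \<le> (Nprime q (t + 1) m1 \<nu> / q ^ 2) * (q ^ 2 * gbinom q a 1)"
      using q by (simp add: power3_eq_cube power2_eq_square mult_ac)
    moreover have "q ^ 2 * gbinom q a 1 > 0" using gbinom_1_pos[OF q1 \<open>a > 0\<close>] q by simp
    ultimately show ?thesis by (simp only: mult_le_cancel_right_pos)
  qed
  moreover have "m2 - t + 1 = n" "m2 + 1 - t = n" using m2 by (simp_all add: n_def)
  ultimately show ?thesis
    unfolding s0_def by (simp add: power_int_minus algebra_simps divide_inverse)
qed

section \<open>Subspaces over a finite field\<close>

lemma sum_card_incidences:
  fixes R :: "'a \<Rightarrow> 'b \<Rightarrow> bool"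
  assumes "finite S" "finite E"
  shows "(\<Sum>x\<in>S. card {y \<in> E. R y x}) = (\<Sum>y\<in>E. card {x \<in> S. R y x})"
  using sum.swap_restrict[OF assms, of "\<lambda>_ _. 1::nat" "\<lambda>x y. R y x"] by simp

lemma double_counting:
  fixes R :: "'a \<Rightarrow> 'b \<Rightarrow> bool"
  assumes "finite S" "finite E"
    and "\<And>x. x \<in> S \<Longrightarrow> real (card {y \<in> E. R y x}) = c"
    and "\<And>y. y \<in> E \<Longrightarrow> real (card {x \<in> S. R y x}) = d"
  shows "real (card S) * c = real (card E) * d"
proof -
  have "(\<Sum>x\<in>S. real (card {y \<in> E. R y x})) = (\<Sum>y\<in>E. real (card {x \<in> S. R y x}))"
    using arg_cong[OF sum_card_incidences[OF assms(1,2), of R], of real] by simp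
  then show ?thesis using assms(3,4) by simp
qed

lemma two_le_card_field: "2 \<le> CARD('a::{finite,field})"
proof -
  have "card {0::'a, 1} \<le> CARD('a)" by (rule card_mono) auto
  then show ?thesis by simp
qed

lemma card_span_insert:
  fixes A :: "('a::{finite,field}^'n) set"
  assumes A: "vec.subspace A" and v: "v \<notin> A"
  shows "card (vec.span (insert v A)) = CARD('a) * card A"
proof -
  have eq: "vec.span (insert v A) = (\<lambda>(c, x). c *s v + x) ` (UNIV \<times> A)"
  proof (intro set_eqI iffI)
    fix y assume "y \<in> vec.span (insert v A)"
    moreover have "vec.span A = A" using A by simp
    ultimately obtain k where "y - k *s v \<in> A"
      using vec.span_breakdown_eq[of y v A] by auto
    then show "y \<in> (\<lambda>(c, x). c *s v + x) ` (UNIV \<times> A)"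
      by (intro image_eqI[of _ _ "(k, y - k *s v)"]) auto
  next
    fix y assume "y \<in> (\<lambda>(c, x). c *s v + x) ` (UNIV \<times> A)"
    then obtain c x where "x \<in> A" "y = c *s v + x" by auto
    then show "y \<in> vec.span (insert v A)"
      by (metis insertCI vec.span_add vec.span_base vec.span_scale)
  qed
  have "inj_on (\<lambda>(c, x). c *s v + x) (UNIV \<times> A)"
  proof (rule inj_onI, clarify)
    fix c x c' x' assume x: "x \<in> A" "x' \<in> A" and e: "c *s v + x = c' *s v + x'"
    have "(c - c') *s v = x' - x"
      using e by (simp add: vector_sub_rdistrib algebra_simps)
    show "c = c' \<and> x = x'"
    proof (cases "c = c'")
      case True then show ?thesis using e by simp
    next
      case False
      have "inverse (c - c') *s ((c - c') *s v) \<in> A"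
        using \<open>(c - c') *s v = x' - x\<close> vec.subspace_diff[OF A x(2) x(1)] vec.subspace_scale[OF A]
        by metis
      then have "v \<in> A"
        using False by (simp only: vector_smult_assoc left_inverse right_minus_eq vector_smult_lid, simp)
      with v show ?thesis by simp
    qed
  qed
  then have "card (vec.span (insert v A)) = card ((UNIV::'a set) \<times> A)"
    unfolding eq by (rule card_image)
  then show ?thesis by (simp add: card_cartesian_product)
qed

lemma card_span_independent:
  fixes B :: "('a::{finite,field}^'n) set"
  assumes "vec.independent B"
  shows "card (vec.span B) = CARD('a) ^ card B"
  using finite[of B] assms
proof (induction B rule: finite_induct)
  case empty then show ?case by simp
next
  case (insert x F)
  have x: "x \<notin> vec.span F" and F: "vec.independent F"
    using insert vec.independent_insert[of x F] by (auto split: if_splits)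
  have "vec.span (insert x F) = vec.span (insert x (vec.span F))"
  proof (subst vec.span_eq, intro conjI)
    show "insert x F \<subseteq> vec.span (insert x (vec.span F))"
      using vec.span_superset[of "insert x (vec.span F)"] vec.span_superset[of F] by blast
    show "insert x (vec.span F) \<subseteq> vec.span (insert x F)"
      using vec.span_superset[of "insert x F"] vec.span_mono[of F "insert x F"] by blast
  qed
  then have "card (vec.span (insert x F)) = CARD('a) * card (vec.span F)"
    using card_span_insert[of "vec.span F" x] x by simp
  then show ?case using insert F by simp
qed

lemma card_subspace:
  fixes W :: "('a::{finite,field}^'n) set"
  assumes "vec.subspace W"
  shows "card W = CARD('a) ^ vec.dim W"
proof -
  obtain B where B: "B \<subseteq> W" "vec.independent B" "W \<subseteq> vec.span B" "card B = vec.dim W"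
    using vec.basis_exists by blast
  then have "vec.span B = W" using assms vec.span_subspace by blast
  then show ?thesis using card_span_independent[OF B(2)] B(4) by simp
qed

lemma dim_subspace_eq_if_card:
  fixes W :: "('a::{finite,field}^'n) set"
  assumes "vec.subspace W" "card W = CARD('a) ^ k"
  shows "vec.dim W = k"
proof -
  have "CARD('a) ^ vec.dim W = CARD('a) ^ k" using card_subspace[OF assms(1)] assms(2) by simp
  then show ?thesis using two_le_card_field[where 'a='a] by simp
qed

lemma exists_hyperplane_avoiding:
  fixes M :: "('a::field^'n) set"
  assumes M: "vec.subspace M" "vec.dim M = Suc k" and v: "v \<in> M" "v \<noteq> 0"
  shows "\<exists>H \<in> subspaces_of M k. v \<notin> H"
proof -
  obtain B where B: "{v} \<subseteq> B" "B \<subseteq> M" "vec.independent B" "M \<subseteq> vec.span B"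
    by (rule vec.maximal_independent_subset_extend[of "{v}" M]) (use v in auto)
  have "card B = Suc k" using vec.basis_card_eq_dim[OF B(2) B(4) B(3)] M by simp
  moreover have "vec.independent (B - {v})" using B(3) vec.independent_mono by blast
  moreover have "vec.span (B - {v}) \<subseteq> M" using B(2) M(1) by (intro vec.span_minimal) auto
  ultimately have "vec.span (B - {v}) \<in> subspaces_of M k"
    using B(1) vec.dim_span_eq_card_independent[of "B - {v}"] by (auto simp: subspaces_of_def)
  moreover have "v \<notin> vec.span (B - {v})" using B(1,3) vec.dependent_def by blast
  ultimately show ?thesis by blast
qed

definition intermediate_subspaces :: "('a::field^'n) set \<Rightarrow> ('a^'n) set \<Rightarrow> nat \<Rightarrow> ('a^'n) set set" where
  "intermediate_subspaces A X k =
     {B. vec.subspace B \<and> A \<subseteq> B \<and> B \<subseteq> X \<and> vec.dim B = vec.dim A + k}"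

lemma intermediate_subspaces_Int:
  "{B \<in> intermediate_subspaces A X k. B \<subseteq> Y} = intermediate_subspaces A (X \<inter> Y) k"
  by (auto simp: intermediate_subspaces_def)

lemma span_insert_in_intermediate_subspaces:
  assumes A: "vec.subspace A" and X: "vec.subspace X" and AX: "A \<subseteq> X"
    and v: "v \<in> X" "v \<notin> A"
  shows "vec.span (insert v A) \<in> intermediate_subspaces A X 1"
proof -
  have "vec.span (insert v A) \<subseteq> X" using assms by (intro vec.span_minimal) auto
  moreover have "v \<notin> vec.span A" using A v by (metis vec.span_eq_iff)
  then have "vec.dim (vec.span (insert v A)) = vec.dim A + 1"
    by (simp add: vec.dim_insert)
  ultimately show ?thesis
    using vec.span_superset[of "insert v A"] by (auto simp: intermediate_subspaces_def)
qed

lemma intermediate_subspace_eq_span_insert: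
  assumes A: "vec.subspace A" and B: "B \<in> intermediate_subspaces A X 1"
    and v: "v \<in> B" "v \<notin> A"
  shows "vec.span (insert v A) = B"
proof -
  have "vec.span (insert v A) \<in> intermediate_subspaces A B 1"
    using B v A by (intro span_insert_in_intermediate_subspaces) (auto simp: intermediate_subspaces_def)
  then show ?thesis
    using B by (intro vec.subspace_dim_equal) (auto simp: intermediate_subspaces_def)
qed

text \<open>Every vector of X - A lies in exactly one B - A, and each B - A has |A|(q - 1) elements.\<close>
lemma card_intermediate_subspaces_1_mult:
  fixes A X :: "('a::{finite,field}^'n) set"
  assumes A: "vec.subspace A" and X: "vec.subspace X" and AX: "A \<subseteq> X"
  shows "card (intermediate_subspaces A X 1) * (CARD('a) * card A - card A) = card X - card A"
proof -
  define E where "E = intermediate_subspaces A X 1"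
  have partition: "X - A = (\<Union>B\<in>E. B - A)"
  proof (intro set_eqI iffI)
    fix v assume v: "v \<in> X - A"
    then have "vec.span (insert v A) \<in> E"
      using span_insert_in_intermediate_subspaces[OF A X AX, of v] by (simp add: E_def)
    moreover have "v \<in> vec.span (insert v A) - A" using v by (simp add: vec.span_base)
    ultimately show "v \<in> (\<Union>B\<in>E. B - A)" by blast
  qed (auto simp: E_def intermediate_subspaces_def)
  have disjoint: "(B - A) \<inter> (B' - A) = {}" if "B \<in> E" "B' \<in> E" "B \<noteq> B'" for B B'
    using that intermediate_subspace_eq_span_insert[OF A] unfolding E_def by blast
  have "card (X - A) = (\<Sum>B\<in>E. card (B - A))"
    unfolding partition by (rule card_UN_disjoint) (use disjoint in auto)
  also have "\<dots> = (\<Sum>B\<in>E. CARD('a) * card A - card A)"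
  proof (rule sum.cong)
    fix B assume "B \<in> E"
    then have "card B = CARD('a) * card A" "A \<subseteq> B"
      using card_subspace[of B] card_subspace[OF A] by (auto simp: E_def intermediate_subspaces_def)
    then show "card (B - A) = CARD('a) * card A - card A" by (simp add: card_Diff_subset)
  qed simp
  finally show ?thesis using AX by (simp add: E_def card_Diff_subset)
qed

lemma card_intermediate_subspaces_1:
  fixes A X :: "('a::{finite,field}^'n) set"
  assumes A: "vec.subspace A" and X: "vec.subspace X" and AX: "A \<subseteq> X"
  shows "real (card (intermediate_subspaces A X 1)) = gbinom CARD('a) (vec.dim X - vec.dim A) 1"
proof -
  define q where "q = real CARD('a)"
  define c where "c = real (card (intermediate_subspaces A X 1))"
  have q: "q > 1" using two_le_card_field[where 'a='a] by (simp add: q_def)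
  have le: "vec.dim A \<le> vec.dim X" using AX by (rule vec.dim_subset)
  have AX_card: "card A \<le> card X" using AX by (intro card_mono) auto
  have "card A \<le> CARD('a) * card A" using two_le_card_field[where 'a='a] by simp
  then have "c * (q * card A - card A) = real (card X) - card A"
    using arg_cong[OF card_intermediate_subspaces_1_mult[OF A X AX], of real] AX_card
    by (simp add: c_def q_def of_nat_diff)
  also have "card X = q ^ vec.dim A * q ^ (vec.dim X - vec.dim A)"
    using card_subspace[OF X] le by (simp add: q_def flip: power_add)
  finally have "q ^ vec.dim A * (c * (q - 1)) = q ^ vec.dim A * (q ^ (vec.dim X - vec.dim A) - 1)"
    using card_subspace[OF A] by (simp add: q_def algebra_simps)
  then have "c * (q - 1) = q ^ (vec.dim X - vec.dim A) - 1" using q by simp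
  then show ?thesis using q unfolding gbinom_1 by (simp add: c_def q_def field_simps)
qed

lemma card_intermediate_subspaces_2:
  fixes A X :: "('a::{finite,field}^'n) set"
  assumes A: "vec.subspace A" and X: "vec.subspace X" and AX: "A \<subseteq> X"
  shows "real (card (intermediate_subspaces A X 2)) = gbinom CARD('a) (vec.dim X - vec.dim A) 2"
proof -
  define q where "q = real CARD('a)"
  define n where "n = vec.dim X - vec.dim A"
  have q: "q > 1" using two_le_card_field[where 'a='a] by (simp add: q_def)
  have "real (card (intermediate_subspaces A X 2)) * gbinom q 2 1
      = real (card (intermediate_subspaces A X 1)) * gbinom q (n - 1) 1"
  proof (rule double_counting[where R = "(\<subseteq>)"])
    fix W assume W: "W \<in> intermediate_subspaces A X 2"
    then have "{U \<in> intermediate_subspaces A X 1. U \<subseteq> W} = intermediate_subspaces A W 1"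
      by (auto simp: intermediate_subspaces_def)
    then show "real (card {U \<in> intermediate_subspaces A X 1. U \<subseteq> W}) = gbinom q 2 1"
      using W card_intermediate_subspaces_1[OF A, of W]
      by (auto simp: intermediate_subspaces_def q_def)
  next
    fix U assume U: "U \<in> intermediate_subspaces A X 1"
    then have "{W \<in> intermediate_subspaces A X 2. U \<subseteq> W} = intermediate_subspaces U X 1"
      by (auto simp: intermediate_subspaces_def)
    then show "real (card {W \<in> intermediate_subspaces A X 2. U \<subseteq> W}) = gbinom q (n - 1) 1"
      using U card_intermediate_subspaces_1[OF _ X, of U]
      by (auto simp: intermediate_subspaces_def q_def n_def)
  qed simp_all
  also have "\<dots> = gbinom q n 2 * gbinom q 2 1"
    using card_intermediate_subspaces_1[OF A X AX] gbinom_2_mult_gbinom_2_1[OF q, of n]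
    by (simp add: q_def n_def)
  finally have "real (card (intermediate_subspaces A X 2)) * gbinom q 2 1 = gbinom q n 2 * gbinom q 2 1" .
  moreover have "gbinom q 2 1 > 0" using gbinom_1_pos[OF q] by simp
  ultimately show ?thesis by (simp add: q_def n_def)
qed

section \<open>Alternating forms\<close>

definition perp :: "('a::field^'n \<Rightarrow> 'a^'n \<Rightarrow> 'a) \<Rightarrow> ('a^'n) set \<Rightarrow> ('a^'n) set" where
  "perp f A = {x. \<forall>a\<in>A. f x a = 0}"

lemma perp_antimono: "A \<subseteq> B \<Longrightarrow> perp f B \<subseteq> perp f A"
  by (auto simp: perp_def)

lemma totally_isotropic_iff_subset_perp:
  "totally_isotropic f W \<longleftrightarrow> vec.subspace W \<and> W \<subseteq> perp f W"
  by (auto simp: totally_isotropic_def perp_def)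

context
  fixes f :: "'a::field^'n \<Rightarrow> 'a^'n \<Rightarrow> 'a"
  assumes f: "alt_bilinear f"
begin

lemma form_add_left: "f (x + y) z = f x z + f y z"
  and form_add_right: "f x (y + z) = f x y + f x z"
  and form_scale_left: "f (c *s x) y = c * f x y"
  and form_scale_right: "f x (c *s y) = c * f x y"
  and form_self: "f x x = 0"
  using f by (simp_all add: alt_bilinear_def)

lemma form_diff_left: "f (x - y) z = f x z - f y z"
  using form_add_left[of "x - y" y z] by simp

lemma form_skew: "f x y = - f y x"
proof -
  have "0 = f (x + y) (x + y)" by (rule form_self[symmetric])
  also have "\<dots> = f x y + f y x" unfolding form_add_left form_add_right by (simp add: form_self)
  finally have "f x y + f y x = 0" by (rule sym)
  then show ?thesis by (simp add: eq_neg_iff_add_eq_0)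
qed

lemma subspace_form_kernel: "vec.subspace {y. f x y = 0}"
  using form_scale_right[of x 0 0]
  unfolding vec.subspace_def by (simp add: form_add_right form_scale_right)

lemma subspace_perp: "vec.subspace (perp f A)"
  using form_scale_left[of 0 0]
  unfolding vec.subspace_def perp_def by (simp add: form_add_left form_scale_left)

lemma perp_span: "perp f (vec.span S) = perp f S"
proof
  show "perp f (vec.span S) \<subseteq> perp f S" by (rule perp_antimono[OF vec.span_superset])
  show "perp f S \<subseteq> perp f (vec.span S)"
  proof
    fix x assume "x \<in> perp f S"
    then have "vec.span S \<subseteq> {y. f x y = 0}"
      by (intro vec.span_minimal[OF _ subspace_form_kernel]) (auto simp: perp_def)
    then show "x \<in> perp f (vec.span S)" by (auto simp: perp_def)
  qed
qed

lemma totally_isotropic_span: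
  assumes "\<forall>x\<in>S. \<forall>y\<in>S. f x y = 0"
  shows "totally_isotropic f (vec.span S)"
proof -
  have "S \<subseteq> perp f S" using assms by (auto simp: perp_def)
  then have "S \<subseteq> perp f (vec.span S)" by (simp add: perp_span)
  then have "vec.span S \<subseteq> perp f (vec.span S)" by (rule vec.span_minimal[OF _ subspace_perp])
  then show ?thesis by (simp add: totally_isotropic_iff_subset_perp)
qed

end

lemma card_vanishing_coordinates:
  "card {y::'a::{finite,zero}^'n. \<forall>i\<in>J. y$i = 0} = CARD('a) ^ (CARD('n) - card J)"
proof -
  define Z where "Z = {y::'a^'n. \<forall>i\<in>J. y$i = 0}"
  define g where "g = (\<lambda>y::'a^'n. restrict (vec_nth y) (-J))"
  have inj: "inj_on g Z"
  proof (rule inj_onI)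
    fix x y assume xy: "x \<in> Z" "y \<in> Z" "g x = g y"
    show "x = y"
    proof (rule vec_eq_iff[THEN iffD2], rule allI)
      fix i show "x $ i = y $ i"
      proof (cases "i \<in> J")
        case True then show ?thesis using xy by (simp add: Z_def)
      next
        case False then show ?thesis using fun_cong[OF xy(3), of i] by (simp add: g_def)
      qed
    qed
  qed
  have img: "g ` Z = PiE (-J) (\<lambda>_. UNIV)"
  proof (intro set_eqI iffI)
    fix \<phi> assume "\<phi> \<in> g ` Z" then show "\<phi> \<in> PiE (-J) (\<lambda>_. UNIV)" by (auto simp: g_def)
  next
    fix \<phi> :: "'n \<Rightarrow> 'a" assume p: "\<phi> \<in> PiE (-J) (\<lambda>_. UNIV)"
    let ?y = "\<chi> i. if i \<in> J then 0 else \<phi> i"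
    have "?y \<in> Z" by (simp add: Z_def)
    moreover have "g ?y = \<phi>"
    proof
      fix i show "g ?y i = \<phi> i"
        using p by (cases "i \<in> J") (auto simp: g_def PiE_def extensional_def)
    qed
    ultimately show "\<phi> \<in> g ` Z" by (metis image_eqI)
  qed
  have "card Z = card (PiE (-J) (\<lambda>_. (UNIV::'a set)))" using card_image[OF inj] img by simp
  also have "\<dots> = CARD('a) ^ card (-J)" by (simp add: card_PiE)
  also have "card (-J) = CARD('n) - card J" by (simp add: Compl_eq_Diff_UNIV card_Diff_subset)
  finally show ?thesis by (simp add: Z_def)
qed

lemma bij_form_coordinates:
  fixes f :: "'a::{finite,field}^'n \<Rightarrow> 'a^'n \<Rightarrow> 'a" and e :: "'n \<Rightarrow> 'a^'n"
  assumes f: "alt_bilinear f" and nd: "nondegenerate f" and e: "vec.span (range e) = UNIV"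
  shows "bij (\<lambda>x. \<chi> i. f x (e i))"
proof -
  define \<Psi> where "\<Psi> = (\<lambda>x. \<chi> i. f x (e i))"
  have lin: "Vector_Spaces.linear (*s) (*s) \<Psi>"
  proof (unfold Vector_Spaces.linear_iff, intro conjI allI)
    show "vector_space ((*s) :: 'a \<Rightarrow> 'a^'n \<Rightarrow> 'a^'n)" by (rule vec.vector_space_axioms)
    show "vector_space ((*s) :: 'a \<Rightarrow> 'a^'n \<Rightarrow> 'a^'n)" by (rule vec.vector_space_axioms)
    show "\<Psi> (x + y) = \<Psi> x + \<Psi> y" for x y
      by (simp add: \<Psi>_def vec_eq_iff form_add_left[OF f])
    show "\<Psi> (c *s x) = c *s \<Psi> x" for c x
      by (simp add: \<Psi>_def vec_eq_iff form_scale_left[OF f])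
  qed
  have "inj \<Psi>"
  proof (rule injI)
    fix x y assume "\<Psi> x = \<Psi> y"
    then have "x - y \<in> perp f (range e)"
      by (auto simp: \<Psi>_def vec_eq_iff perp_def form_diff_left[OF f])
    moreover have "perp f (range e) = perp f UNIV" using perp_span[OF f, of "range e"] e by simp
    ultimately have "x - y \<in> perp f UNIV" by simp
    then have "\<forall>z. f (x - y) z = 0" by (simp add: perp_def)
    then have "x - y = 0" using nd unfolding nondegenerate_def by blast
    then show "x = y" by simp
  qed
  then show ?thesis using vec.linear_inj_imp_surj[OF lin] by (simp add: \<Psi>_def bij_def)
qed

lemma card_perp:
  fixes f :: "'a::{finite,field}^'n \<Rightarrow> 'a^'n \<Rightarrow> 'a"
  assumes f: "alt_bilinear f" and nd: "nondegenerate f" and A: "vec.subspace A"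
  shows "card (perp f A) = CARD('a) ^ (CARD('n) - vec.dim A)"
proof -
  obtain BA where BA: "BA \<subseteq> A" "vec.independent BA" "A \<subseteq> vec.span BA" "card BA = vec.dim A"
    using vec.basis_exists by blast
  obtain B where B: "BA \<subseteq> B" "vec.independent B" "UNIV \<subseteq> vec.span B"
    by (rule vec.maximal_independent_subset_extend[of BA UNIV]) (use BA(2) in auto)
  have "card B = CARD('n)"
    using vec.basis_card_eq_dim[of B UNIV] B vec.dim_UNIV card_cart_basis by simp
  then obtain e where e: "bij_betw e (UNIV :: 'n set) B"
    using finite_same_card_bij[of "UNIV :: 'n set" B] by auto
  define J where "J = e -` BA"
  have bij_J: "bij_betw e J BA"
    using e B(1) unfolding J_def bij_betw_def by (auto intro: inj_on_subset)
  have "vec.span (range e) = UNIV" using e B(3) by (auto simp: bij_betw_def)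
  then have bij: "bij (\<lambda>x. \<chi> i. f x (e i))" by (rule bij_form_coordinates[OF f nd])
  have "vec.span BA = A" using BA A vec.span_subspace by blast
  then have "perp f A = perp f (e ` J)"
    using perp_span[OF f, of BA] bij_J by (simp add: bij_betw_def)
  also have "\<dots> = (\<lambda>x. \<chi> i. f x (e i)) -` {y. \<forall>i\<in>J. y $ i = 0}"
    by (auto simp: perp_def)
  finally have "card (perp f A) = card ((\<lambda>x. \<chi> i. f x (e i)) -` {y. \<forall>i\<in>J. y $ i = 0})"
    by (simp only:)
  also have "\<dots> = card {y::'a^'n. \<forall>i\<in>J. y $ i = 0}"
    using bij by (intro card_vimage_inj) (auto simp: bij_def)
  also have "\<dots> = CARD('a) ^ (CARD('n) - vec.dim A)"
    using bij_betw_same_card[OF bij_J] BA(4) by (simp add: card_vanishing_coordinates)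
  finally show ?thesis .
qed

section \<open>Totally isotropic subspaces\<close>

lemma totally_isotropic_subset:
  "totally_isotropic f X \<Longrightarrow> vec.subspace Y \<Longrightarrow> Y \<subseteq> X \<Longrightarrow> totally_isotropic f Y"
  by (auto simp: totally_isotropic_def)

lemma intermediate_subspaces_in_Pm:
  "totally_isotropic f X \<Longrightarrow> B \<in> intermediate_subspaces A X k \<Longrightarrow> B \<in> Pm f (vec.dim A + k)"
  by (auto simp: intermediate_subspaces_def Pm_def intro: totally_isotropic_subset)

lemma isotropic_extensions_eq_intermediate_subspaces:
  assumes f: "alt_bilinear f" and A: "totally_isotropic f A"
  shows "{B \<in> Pm f (vec.dim A + 1). A \<subseteq> B} = intermediate_subspaces A (perp f A) 1"
proof (intro set_eqI iffI)
  fix B assume "B \<in> {B \<in> Pm f (vec.dim A + 1). A \<subseteq> B}"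
  then show "B \<in> intermediate_subspaces A (perp f A) 1"
    using perp_antimono[of A B f]
    by (auto simp: Pm_def intermediate_subspaces_def totally_isotropic_iff_subset_perp)
next
  fix B assume B: "B \<in> intermediate_subspaces A (perp f A) 1"
  have A_subspace: "vec.subspace A" using A by (simp add: totally_isotropic_def)
  have "\<not> B \<subseteq> A"
  proof
    assume "B \<subseteq> A"
    then have "B = A" using B by (auto simp: intermediate_subspaces_def)
    then show False using B by (simp add: intermediate_subspaces_def)
  qed
  then obtain v where v: "v \<in> B" "v \<notin> A" by blast
  have v_perp: "f v a = 0" if "a \<in> A" for a
    using B v that by (auto simp: intermediate_subspaces_def perp_def)
  have "f x y = 0" if "x \<in> insert v A" "y \<in> insert v A" for x y
    using that A v_perp form_self[OF f] form_skew[OF f, of x v]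
    by (auto simp: totally_isotropic_def)
  then have "totally_isotropic f (vec.span (insert v A))"
    by (intro totally_isotropic_span[OF f]) blast
  moreover have "vec.span (insert v A) = B"
    by (rule intermediate_subspace_eq_span_insert[OF A_subspace B v])
  ultimately show "B \<in> {B \<in> Pm f (vec.dim A + 1). A \<subseteq> B}"
    using B by (auto simp: Pm_def intermediate_subspaces_def)
qed

lemma card_Pm_between:
  fixes A F :: "('a::{finite,field}^'n) set"
  assumes A: "A \<in> Pm f a" and F: "F \<in> Pm f m" and AF: "A \<subseteq> F"
  shows "real (card {B \<in> Pm f (Suc a). A \<subseteq> B \<and> B \<subseteq> F}) = gbinom CARD('a) (m - a) 1"
proof -
  have "{B \<in> Pm f (Suc a). A \<subseteq> B \<and> B \<subseteq> F} = intermediate_subspaces A F 1"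
    using A F by (auto simp: Pm_def intermediate_subspaces_def totally_isotropic_def; blast)
  then show ?thesis
    using card_intermediate_subspaces_1[of A F] A F AF by (simp add: Pm_def totally_isotropic_def)
qed

context
  fixes f :: "'a::{finite,field}^'n \<Rightarrow> 'a^'n \<Rightarrow> 'a" and \<nu> :: nat
  assumes f: "alt_bilinear f" and nd: "nondegenerate f" and dim_V: "CARD('n) = 2 * \<nu>"
begin

lemma dim_perp: "vec.subspace A \<Longrightarrow> vec.dim (perp f A) = 2 * \<nu> - vec.dim A"
  using dim_subspace_eq_if_card[OF subspace_perp[OF f] card_perp[OF f nd]] dim_V by simp

lemma card_isotropic_extensions:
  assumes A: "A \<in> Pm f a"
  shows "real (card {B \<in> Pm f (Suc a). A \<subseteq> B}) = gbinom CARD('a) (2 * (\<nu> - a)) 1"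
proof -
  have A_ti: "totally_isotropic f A" and dim_A: "vec.dim A = a" and A_subspace: "vec.subspace A"
    using A by (auto simp: Pm_def totally_isotropic_def)
  then have A_perp: "A \<subseteq> perp f A" by (simp add: totally_isotropic_iff_subset_perp)
  then have "a \<le> 2 * \<nu> - a"
    using vec.dim_subset[OF A_perp] dim_perp[OF A_subspace] dim_A by simp
  then have "vec.dim (perp f A) - vec.dim A = 2 * (\<nu> - a)"
    using dim_perp[OF A_subspace] dim_A by simp
  then show ?thesis
    using isotropic_extensions_eq_intermediate_subspaces[OF f A_ti] dim_A
      card_intermediate_subspaces_1[OF A_subspace subspace_perp[OF f] A_perp]
    by simp
qed

lemma card_Pm_superspaces_recurrence:
  assumes A: "A \<in> Pm f a" and am: "a < m"
    and c: "\<And>B. B \<in> Pm f (Suc a) \<Longrightarrow> A \<subseteq> B \<Longrightarrow> real (card {F \<in> Pm f m. B \<subseteq> F}) = c"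
  shows "real (card {F \<in> Pm f m. A \<subseteq> F}) * gbinom CARD('a) (m - a) 1
       = gbinom CARD('a) (2 * (\<nu> - a)) 1 * c"
proof -
  have "real (card {F \<in> Pm f m. A \<subseteq> F}) * gbinom CARD('a) (m - a) 1
      = real (card {B \<in> Pm f (Suc a). A \<subseteq> B}) * c"
  proof (rule double_counting[where R = "(\<subseteq>)"])
    fix F assume F: "F \<in> {F \<in> Pm f m. A \<subseteq> F}"
    have "{B \<in> {B \<in> Pm f (Suc a). A \<subseteq> B}. B \<subseteq> F} = {B \<in> Pm f (Suc a). A \<subseteq> B \<and> B \<subseteq> F}"
      by auto
    then show "real (card {B \<in> {B \<in> Pm f (Suc a). A \<subseteq> B}. B \<subseteq> F}) = gbinom CARD('a) (m - a) 1"
      using card_Pm_between[OF A] F by simp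
  next
    fix B assume "B \<in> {B \<in> Pm f (Suc a). A \<subseteq> B}"
    moreover from this have "{F \<in> {F \<in> Pm f m. A \<subseteq> F}. B \<subseteq> F} = {F \<in> Pm f m. B \<subseteq> F}" by auto
    ultimately show "real (card {F \<in> {F \<in> Pm f m. A \<subseteq> F}. B \<subseteq> F}) = c" using c by simp
  qed simp_all
  then show ?thesis using card_isotropic_extensions[OF A] by simp
qed

lemma card_Pm_superspaces:
  assumes A: "A \<in> Pm f a" and m\<nu>: "m \<le> \<nu>"
  shows "real (card {F \<in> Pm f m. A \<subseteq> F}) = Nprime CARD('a) a m \<nu>"
proof (cases "a \<le> m")
  case False
  then have "{F \<in> Pm f m. A \<subseteq> F} = {}"
    using A vec.dim_subset[of A] by (fastforce simp: Pm_def)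
  then show ?thesis using False by (simp add: Nprime_def)
next
  case True
  then show ?thesis using A
  proof (induction "m - a" arbitrary: a A)
    case 0
    then have "a = m" by arith
    have "F = A" if "F \<in> Pm f m" "A \<subseteq> F" for F
      using that "0.prems" \<open>a = m\<close> vec.subspace_dim_equal[of A F]
      by (auto simp: Pm_def totally_isotropic_def)
    then have "{F \<in> Pm f m. A \<subseteq> F} = {A}" using "0.prems" \<open>a = m\<close> by auto
    moreover have "Nprime CARD('a) a m \<nu> = 1" using \<open>a = m\<close> by (simp add: Nprime_def)
    ultimately show ?case by simp
  next
    case (Suc d)
    define q where "q = real CARD('a)"
    have q: "q > 1" using two_le_card_field[where 'a='a] by (simp add: q_def)
    have am: "a < m" using Suc.hyps(2) by arith
    have "real (card {F \<in> Pm f m. A \<subseteq> F}) * gbinom q (m - a) 1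
        = gbinom q (2 * (\<nu> - a)) 1 * Nprime q (Suc a) m \<nu>"
      using card_Pm_superspaces_recurrence[OF Suc.prems(2) am] Suc.hyps am by (simp add: q_def)
    also have "\<dots> = Nprime q a m \<nu> * gbinom q (m - a) 1"
      using Nprime_mult_gbinom[OF q am m\<nu>] by simp
    finally show ?case
      using gbinom_1_pos[OF q, of "m - a"] am by (simp add: q_def)
  qed
qed

section \<open>Bounds on the sizes of C1 and C2\<close>

lemma sum_card_intermediate_subspaces_Int:
  assumes T: "vec.subspace T" and M: "totally_isotropic f M" and TM: "T \<subseteq> M" and m: "m \<le> \<nu>"
  shows "(\<Sum>F\<in>{F \<in> Pm f m. T \<subseteq> F}. real (card (intermediate_subspaces T (M \<inter> F) k)))
       = real (card (intermediate_subspaces T M k)) * Nprime CARD('a) (vec.dim T + k) m \<nu>"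
proof -
  define S where "S = {F \<in> Pm f m. T \<subseteq> F}"
  define I where "I = intermediate_subspaces T M k"
  have "(\<Sum>F\<in>S. real (card (intermediate_subspaces T (M \<inter> F) k)))
      = real (\<Sum>F\<in>S. card {U \<in> I. U \<subseteq> F})"
    by (simp only: I_def intermediate_subspaces_Int of_nat_sum)
  also have "\<dots> = real (\<Sum>U\<in>I. card {F \<in> S. U \<subseteq> F})"
    using sum_card_incidences[of S I "(\<subseteq>)"] by simp
  also have "\<dots> = (\<Sum>U\<in>I. Nprime CARD('a) (vec.dim T + k) m \<nu>)"
  proof (unfold of_nat_sum, rule sum.cong)
    fix U assume U: "U \<in> I"
    then have "{F \<in> S. U \<subseteq> F} = {F \<in> Pm f m. U \<subseteq> F}"
      by (auto simp: S_def I_def intermediate_subspaces_def)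
    then show "real (card {F \<in> S. U \<subseteq> F}) = Nprime CARD('a) (vec.dim T + k) m \<nu>"
      using card_Pm_superspaces[OF intermediate_subspaces_in_Pm[OF M] m] U
      by (simp add: I_def)
  qed simp
  finally show ?thesis by (simp add: S_def I_def)
qed

lemma s0_le_card_C1:
  assumes T: "vec.subspace T" "vec.dim T = t" and M: "M \<in> Pm f s" and TM: "T \<subseteq> M"
    and m1: "m1 \<le> \<nu>"
  shows "s0 CARD('a) \<nu> m1 s t \<le> real (card (C1 f M T m1 t))"
proof -
  define q where "q = real CARD('a)"
  have q: "q > 1" using two_le_card_field[where 'a='a] by (simp add: q_def)
  have M_ti: "totally_isotropic f M" and M_subspace: "vec.subspace M" and dim_M: "vec.dim M = s"
    using M by (auto simp: Pm_def totally_isotropic_def)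
  define S where "S = {F \<in> Pm f m1. T \<subseteq> F}"
  define k where "k F = vec.dim (M \<inter> F) - t" for F
  have card_I: "real (card (intermediate_subspaces T (M \<inter> F) 1)) = gbinom q (k F) 1"
    "real (card (intermediate_subspaces T (M \<inter> F) 2)) = gbinom q (k F) 2" if "F \<in> S" for F
  proof -
    have "vec.subspace (M \<inter> F)" "T \<subseteq> M \<inter> F"
      using that M_subspace TM by (auto simp: S_def Pm_def totally_isotropic_def vec.subspace_inter)
    then show "real (card (intermediate_subspaces T (M \<inter> F) 1)) = gbinom q (k F) 1"
      "real (card (intermediate_subspaces T (M \<inter> F) 2)) = gbinom q (k F) 2"
      using card_intermediate_subspaces_1[OF T(1)] card_intermediate_subspaces_2[OF T(1)] T(2)
      by (simp_all add: q_def k_def)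
  qed
  have "s0 q \<nu> m1 s t = (\<Sum>F\<in>S. real (card (intermediate_subspaces T (M \<inter> F) 1)))
                        - q * (\<Sum>F\<in>S. real (card (intermediate_subspaces T (M \<inter> F) 2)))"
    using sum_card_intermediate_subspaces_Int[OF T(1) M_ti TM m1]
      card_intermediate_subspaces_1[OF T(1) M_subspace TM] card_intermediate_subspaces_2[OF T(1) M_subspace TM]
    by (simp add: s0_def S_def q_def T(2) dim_M)
  also have "\<dots> = (\<Sum>F\<in>S. gbinom q (k F) 1 - q * gbinom q (k F) 2)"
    by (simp only: card_I sum_subtractf sum_distrib_left cong: sum.cong)
  also have "\<dots> \<le> (\<Sum>F\<in>S. if k F = 0 then 0 else 1)"
    by (intro sum_mono gbinom_1_minus_gbinom_2_le[OF q])
  also have "\<dots> = (\<Sum>F\<in>S. if k F \<noteq> 0 then 1 else 0)" by (rule sum.cong) auto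
  also have "\<dots> = real (card {F \<in> S. k F \<noteq> 0})" by (simp add: sum.inter_filter[symmetric])
  also have "{F \<in> S. k F \<noteq> 0} = C1 f M T m1 t"
    by (auto simp: C1_def S_def k_def Int_commute)
  finally show ?thesis by (simp add: q_def)
qed

lemma card_C2_ge:
  assumes T: "vec.subspace T" "vec.dim T = t" "1 \<le> t" and M: "M \<in> Pm f (m2 + 1)"
    and TM: "T \<subseteq> M" and m2: "m2 \<le> \<nu>"
  shows "Nprime CARD('a) t m2 \<nu> + 1 \<le> real (card (C2 f M T m2))"
proof -
  define S where "S = {F \<in> Pm f m2. T \<subseteq> F}"
  have M_subspace: "vec.subspace M" and dim_M: "vec.dim M = Suc m2"
    using M by (auto simp: Pm_def totally_isotropic_def)
  have "T \<noteq> {0}" using T by auto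
  then obtain v where "v \<in> T" "v \<noteq> 0" using vec.subspace_0[OF T(1)] by blast
  then obtain H where H: "H \<in> subspaces_of M m2" "\<not> T \<subseteq> H"
    using exists_hyperplane_avoiding[OF M_subspace dim_M, of v] TM by blast
  then have "insert H S \<subseteq> C2 f M T m2" "H \<notin> S" by (auto simp: C2_def S_def)
  then have "card S + 1 \<le> card (C2 f M T m2)"
    using card_mono[of "C2 f M T m2" "insert H S"] by simp
  moreover have "T \<in> Pm f t"
    using M T TM by (auto simp: Pm_def intro: totally_isotropic_subset)
  then have "real (card S) = Nprime CARD('a) t m2 \<nu>"
    using card_Pm_superspaces[OF _ m2] by (simp add: S_def)
  ultimately show ?thesis by linarith
qed

lemma C1_nonempty:
  assumes T: "vec.subspace T" "vec.dim T = t" and M: "M \<in> Pm f s" and TM: "T \<subseteq> M"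
    and ts: "t < s" and m1: "t + 1 \<le> m1" "m1 \<le> \<nu>"
  shows "C1 f M T m1 t \<noteq> {}"
proof -
  have M_ti: "totally_isotropic f M" and M_subspace: "vec.subspace M" and dim_M: "vec.dim M = s"
    using M by (auto simp: Pm_def totally_isotropic_def)
  have "\<not> M \<subseteq> T" using vec.dim_subset[of M T] T(2) dim_M ts by auto
  then obtain v where v: "v \<in> M" "v \<notin> T" by blast
  define U where "U = vec.span (insert v T)"
  have U: "U \<in> intermediate_subspaces T M 1"
    unfolding U_def by (rule span_insert_in_intermediate_subspaces[OF T(1) M_subspace TM v])
  then have "U \<in> Pm f (t + 1)" using intermediate_subspaces_in_Pm[OF M_ti] T(2) by blast
  then have "real (card {F \<in> Pm f m1. U \<subseteq> F}) > 0"
    using card_Pm_superspaces[OF _ m1(2)] Nprime_pos[of _ "t + 1" m1 \<nu>] m1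
      two_le_card_field[where 'a='a] by simp
  then obtain F where F: "F \<in> Pm f m1" "U \<subseteq> F" by (auto simp: card_gt_0_iff)
  have "t + 1 \<le> vec.dim (F \<inter> M)"
    using vec.dim_subset[of U "F \<inter> M"] F U T(2) by (auto simp: intermediate_subspaces_def)
  then have "F \<in> C1 f M T m1 t" using F U by (auto simp: C1_def intermediate_subspaces_def)
  then show ?thesis by blast
qed

end

lemma mult_less_of_bounds:
  fixes x c N d :: real
  assumes "0 < c" "x \<le> c" "0 \<le> N" "N + 1 \<le> d"
  shows "x * N < c * d"
proof -
  have "x * N \<le> c * N" using assms by (intro mult_right_mono)
  also have "\<dots> < c * (N + 1)" using assms by simp
  also have "\<dots> \<le> c * d" using assms by (intro mult_left_mono) auto
  finally show ?thesis .
qed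

theorem lemma4p1:
  fixes f :: "'a::{finite,field}^'n \<Rightarrow> 'a^'n \<Rightarrow> 'a"
    and \<nu> m1 m2 t :: nat and M T :: "('a^'n) set"
  defines "q \<equiv> real CARD('a)"
  assumes dimV: "CARD('n) = 2 * \<nu>"
    and f: "alt_bilinear f" "nondegenerate f"
    and t: "t \<ge> 1"
    and m1: "\<nu> > m1" "m1 \<ge> t + 1"
    and m2: "\<nu> > m2" "m2 \<ge> t + 1"
    and M: "M \<in> Pm f (m2 + 1)"
    and T: "vec.subspace T" "T \<subseteq> M" "vec.dim T = t"
  shows "real (card (C1 f M T m1 t) * card (C2 f M T m2))
           > s0 q \<nu> m1 (m2 + 1) t * Nprime q t m2 \<nu>
       \<and> (2 * \<nu> \<ge> m1 + 2 * m2 - t + 4 \<longrightarrow>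
           real (card (C1 f M T m1 t) * card (C2 f M T m2))
           > (gbinom q (m2 - t + 1) 1 - q powi (-2)) * Nprime q (t + 1) m1 \<nu> * Nprime q t m2 \<nu>)"
proof -
  have q: "q \<ge> 2" using two_le_card_field[where 'a='a] by (simp add: q_def)
  have "C1 f M T m1 t \<noteq> {}"
    using C1_nonempty[OF f dimV T(1,3) M T(2)] m1 m2 by simp
  then have C1_pos: "0 < real (card (C1 f M T m1 t))" by (simp add: card_gt_0_iff)
  have C1_ge: "s0 q \<nu> m1 (m2 + 1) t \<le> real (card (C1 f M T m1 t))"
    using s0_le_card_C1[OF f dimV T(1,3) M T(2)] m1 by (simp add: q_def)
  have C2_ge: "Nprime q t m2 \<nu> + 1 \<le> real (card (C2 f M T m2))"
    using card_C2_ge[OF f dimV T(1,3) t M T(2)] m2 by (simp add: q_def)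
  have "0 \<le> Nprime q t m2 \<nu>" using Nprime_nonneg q m2 by simp
  then have bound: "x * Nprime q t m2 \<nu> < real (card (C1 f M T m1 t) * card (C2 f M T m2))"
    if "x \<le> s0 q \<nu> m1 (m2 + 1) t" for x
    using mult_less_of_bounds[OF C1_pos _ _ C2_ge] that C1_ge by simp
  show ?thesis
    using bound[OF order_refl] bound[OF s0_lower_bound[OF q _ _ m2(2)]] m1 by (simp add: mult_ac)
qed

end
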